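(* Let $\mu>0$ and integers $n,r,s$ satisfy $n/\mu\ge\max\{4,r\}$ and $s\ge(12n/\mu)\log(12n/\mu)$. Let $\xi_H$ be the Haar probability measure on $\mathbb{V}_{s,r}$ and $\mathbb{K}(s,r,\sqrt{\mu r/n})=\{\boldsymbol{U}\in\mathbb{R}^{s\times r}:\boldsymbol{U}^\top\boldsymbol{U}=\boldsymbol{I}_r,\ \|\boldsymbol{U}\|_{2,\infty}\le\sqrt{\mu r/n}\}$. Then $\xi_H(\mathbb{K}(s,r,\sqrt{\mu r/n}))\ge\tfrac12$.
   Context: $\mathbb{V}_{s,r}=\{\boldsymbol{U}\in\mathbb{R}^{s\times r}:\boldsymbol{U}^\top\boldsymbol{U}=\boldsymbol{I}_r\}$; the Haar measure is the probability measure on it invariant under left multiplication by $s\times s$ orthogonal matrices and right multiplication by $r\times r$ orthogonal matrices. $\|\boldsymbol{U}\|_{2,\infty}$ is the maximum Euclidean norm of a row of $\boldsymbol{U}$. *)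

theory Defs
  imports "HOL-Analysis.Analysis" "HOL-Probability.Probability"
begin

text \<open>Stiefel manifold V_{s,r}: s x r real matrices with orthonormal columns.
  Matrices are real^'r^'s (rows indexed by 's, columns by 'r), so s = CARD('s), r = CARD('r).\<close>
definition stiefel :: "(real^'r^'s) set" where
  "stiefel = {U. transpose U ** U = mat 1}"

definition norm_2inf :: "real^'r^'s \<Rightarrow> real" where
  "norm_2inf U = Max (range (\<lambda>i. norm (U $ i)))"

definition incoherent_set :: "real \<Rightarrow> (real^'r^'s) set" where
  "incoherent_set c = {U \<in> stiefel. norm_2inf U \<le> c}"

definition haar_stiefel :: "(real^'r^'s) measure \<Rightarrow> bool" where
  "haar_stiefel M \<longleftrightarrow> prob_space M \<and> sets M = sets borel \<and> emeasure M stiefel = 1 \<and>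
     (\<forall>Q::real^'s^'s. orthogonal_matrix Q \<longrightarrow> distr M M (\<lambda>U. Q ** U) = M) \<and>
     (\<forall>R::real^'r^'r. orthogonal_matrix R \<longrightarrow> distr M M (\<lambda>U. U ** R) = M)"

end

theory Submission
  imports Defs "HOL-Computational_Algebra.Polynomial"
begin

(*
  Let c_k be the k-th moment of the squared norm of a fixed row of a Haar-distributed U.
  Invariance under left rotations gives E |a^T U|^(2k) = |a|^(2k) c_k for every vector a.
  For a = e_i + t e_j both sides are polynomials in t; comparing the coefficients of t^2,
  summing over j <> i and using that U U^T is an orthogonal projection of trace r yields
  (r + 2m) c_m = (s + 2m) c_(m+1), hence c_K <= ((r + 2K - 2)/s)^K. Markov's inequality for
  the K-th power and a union bound over the s rows bound the probability that some row has
  squared norm at least mu r/n by s c_K (n/(mu r))^K, which is at most 1/2 for K close to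
  ln (12 n/mu).
*)

section \<open>Polynomial coefficients\<close>

lemma coeff_trinomial_power_1:
  "coeff ([:a, b, c:] ^ k) 1 = of_nat k * a ^ (k - 1) * (b :: 'a :: comm_semiring_1)"
proof (induction k)
  case (Suc k)
  have "coeff ([:a, b, c:] ^ Suc k) 1 = a * coeff ([:a, b, c:] ^ k) 1 + b * coeff ([:a, b, c:] ^ k) 0"
    by (simp add: coeff_pCons)
  then show ?case
    unfolding Suc.IH coeff_0_power by (cases k) (simp_all add: algebra_simps)
qed simp

lemma coeff_trinomial_power_2:
  "coeff ([:a, b, c:] ^ k) 2 =
     of_nat k * a ^ (k - 1) * c + of_nat (k choose 2) * a ^ (k - 2) * (b :: 'a :: comm_semiring_1)\<^sup>2"
proof (induction k)
  case (Suc k)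
  have rec: "coeff ([:a, b, c:] ^ Suc k) 2 =
        a * coeff ([:a, b, c:] ^ k) 2 + b * coeff ([:a, b, c:] ^ k) 1 + c * coeff ([:a, b, c:] ^ k) 0"
    by (simp add: coeff_pCons numeral_2_eq_2 add.assoc)
  consider "k = 0" | "k = 1" | j where "k = Suc (Suc j)"
    by (metis One_nat_def not0_implies_Suc)
  then show ?case
  proof cases
    case 1
    then show ?thesis by (simp add: rec numeral_2_eq_2)
  next
    case 2
    then show ?thesis
      by (simp add: rec Suc.IH coeff_trinomial_power_1 numeral_2_eq_2 algebra_simps)
         (simp add: mult_2_right distrib_left add_ac)
  next
    case 3
    have choose: "of_nat (Suc k choose 2) = (of_nat k + of_nat (k choose 2) :: 'a)"
      by (simp add: numeral_2_eq_2)
    have powers: "a ^ k = a * a ^ (k - Suc 0)" "a ^ (k - Suc 0) = a * a ^ (k - 2)"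
      using 3 by simp_all
    show ?thesis
      unfolding rec Suc.IH coeff_trinomial_power_1 coeff_0_power diff_Suc_1 choose
      by (simp add: powers power2_eq_square algebra_simps)
  qed
qed (simp add: binomial_eq_0)

lemma continuous_on_coeff_pCons:
  assumes "continuous_on S f" "\<And>i. continuous_on S (\<lambda>x. coeff (p x) i)"
  shows "continuous_on S (\<lambda>x. coeff (pCons (f x) (p x)) n)"
  using assms by (cases n) simp_all

lemma continuous_on_coeff_power:
  fixes p :: "'a::topological_space \<Rightarrow> 'b::real_normed_field poly"
  assumes "\<And>i. continuous_on S (\<lambda>x. coeff (p x) i)"
  shows "continuous_on S (\<lambda>x. coeff (p x ^ k) n)"
proof (induction k arbitrary: n)
  case (Suc k)
  show ?case
    unfolding power_Suc coeff_mult by (intro continuous_intros assms Suc.IH)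
qed (simp add: coeff_1)

lemma integral_coeff_eq_coeff:
  fixes p :: "'a \<Rightarrow> real poly"
  assumes integrable: "\<And>i. integrable M (\<lambda>x. coeff (p x) i)"
    and degree: "\<And>x. degree (p x) \<le> N"
    and poly: "\<And>t. (\<integral>x. poly (p x) t \<partial>M) = poly q t"
  shows "(\<integral>x. coeff (p x) n \<partial>M) = coeff q n"
proof -
  define E where "E = (\<Sum>i\<le>N. monom (\<integral>x. coeff (p x) i \<partial>M) i)"
  have "poly E t = poly q t" for t
  proof -
    have "poly E t = (\<Sum>i\<le>N. (\<integral>x. coeff (p x) i \<partial>M) * t ^ i)"
      by (simp add: E_def poly_sum poly_monom)
    also have "\<dots> = (\<integral>x. (\<Sum>i\<le>N. coeff (p x) i * t ^ i) \<partial>M)"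
      using integrable by simp
    also have "\<dots> = (\<integral>x. poly (p x) t \<partial>M)"
    proof (rule Bochner_Integration.integral_cong[OF refl])
      fix x
      have "poly (\<Sum>i\<le>N. monom (coeff (p x) i) i) t = (\<Sum>i\<le>N. coeff (p x) i * t ^ i)"
        by (simp add: poly_sum poly_monom)
      then show "(\<Sum>i\<le>N. coeff (p x) i * t ^ i) = poly (p x) t"
        by (simp only: poly_as_sum_of_monoms'[OF degree])
    qed
    finally show ?thesis using poly by simp
  qed
  then have "E = q" by (simp add: poly_eq_poly_eq_iff[symmetric] fun_eq_iff)
  moreover have "(\<integral>x. coeff (p x) n \<partial>M) = coeff E n"
  proof (cases "n \<le> N")
    case False
    then have "coeff (p x) n = 0" for x using degree[of x] by (simp add: coeff_eq_0)
    with False show ?thesis by (simp add: E_def coeff_sum)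
  qed (simp add: E_def coeff_sum)
  ultimately show ?thesis by simp
qed

section \<open>Stiefel matrices\<close>

lemma vector_matrix_mult_axis: "axis i c v* (A :: real^'n^'m) = c *\<^sub>R A $ i"
  by (simp add: vector_matrix_mult_def vec_eq_iff axis_def if_distrib[where f = "\<lambda>x. x * z" for z]
      cong: if_cong)

lemma row_gram_entry: "(U ** transpose U) $ i $ j = U $ i \<bullet> U $ j"
  by (simp add: matrix_mult_transpose_dot_row row_def)

lemma stiefel_row_gram_idempotent:
  assumes "U \<in> stiefel"
  shows "(U ** transpose U) ** (U ** transpose U) = U ** transpose U"
  using assms by (simp add: stiefel_def matrix_mul_assoc flip: matrix_mul_assoc[of U])

lemma stiefel_sum_row_inner_square:
  assumes "U \<in> stiefel"
  shows "(\<Sum>j\<in>UNIV. (U $ i \<bullet> U $ j)\<^sup>2) = U $ i \<bullet> U $ i"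
proof -
  have "(\<Sum>j\<in>UNIV. (U $ i \<bullet> U $ j)\<^sup>2) = ((U ** transpose U) ** (U ** transpose U)) $ i $ i"
    using matrix_matrix_mult_def[of "U ** transpose U" "U ** transpose U"]
    by (simp add: row_gram_entry power2_eq_square inner_commute)
  then show ?thesis
    by (simp only: stiefel_row_gram_idempotent[OF assms] row_gram_entry)
qed

lemma stiefel_sum_row_inner:
  fixes U :: "real^'r^'s"
  assumes "U \<in> stiefel"
  shows "(\<Sum>j\<in>UNIV. U $ j \<bullet> U $ j) = real CARD('r)"
proof -
  have "(\<Sum>j\<in>UNIV. U $ j \<bullet> U $ j) = trace (U ** transpose U)"
    by (simp add: trace_def row_gram_entry)
  also have "\<dots> = trace (transpose U ** U)" by (rule trace_mul_sym)
  also have "\<dots> = trace (mat 1 :: real^'r^'r)" using assms by (simp add: stiefel_def)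
  finally show ?thesis by (simp add: trace_I)
qed

lemma stiefel_norm: "U \<in> stiefel \<Longrightarrow> norm U = sqrt (real CARD('r))" for U :: "real^'r^'s"
  by (simp only: norm_eq_sqrt_inner inner_vec_def[of U U] stiefel_sum_row_inner)

lemma compact_stiefel: "compact (stiefel :: (real^'r^'s) set)"
proof (rule compact_eq_bounded_closed[THEN iffD2], intro conjI)
  show "bounded (stiefel :: (real^'r^'s) set)"
    unfolding bounded_iff using stiefel_norm by (metis order_refl)
  have "continuous_on UNIV (\<lambda>U::real^'r^'s. transpose U ** U)"
    unfolding matrix_matrix_mult_def transpose_def by (intro continuous_intros)
  then show "closed (stiefel :: (real^'r^'s) set)"
    unfolding stiefel_def by (intro closed_Collect_eq continuous_on_const)
qed

lemma stiefel_sum_second_coeff: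
  fixes U :: "real^'r^'s"
  assumes "U \<in> stiefel"
  shows "(\<Sum>j\<in>UNIV - {i}. real (Suc m) * (U $ i \<bullet> U $ i) ^ m * (U $ j \<bullet> U $ j)
            + real (Suc m choose 2) * (U $ i \<bullet> U $ i) ^ (m - 1) * (2 * (U $ i \<bullet> U $ j))\<^sup>2)
         = real (Suc m) * ((real CARD('r) + 2 * real m) * (U $ i \<bullet> U $ i) ^ m
                           - (1 + 2 * real m) * (U $ i \<bullet> U $ i) ^ Suc m)"
    (is "?lhs = _")
proof -
  define X where "X = U $ i \<bullet> U $ i"
  have diag: "(\<Sum>j\<in>UNIV - {i}. U $ j \<bullet> U $ j) = real CARD('r) - X"
    using stiefel_sum_row_inner[OF assms] by (simp add: sum_diff1 X_def)
  have off: "(\<Sum>j\<in>UNIV - {i}. (U $ i \<bullet> U $ j)\<^sup>2) = X - X\<^sup>2"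
    using stiefel_sum_row_inner_square[OF assms, of i] by (simp add: sum_diff1 X_def)
  have choose: "real (Suc m choose 2) = real (Suc m) * real m / 2"
    by (induction m) (simp_all add: numeral_2_eq_2 field_simps)
  have shift: "real m * (X ^ (m - 1) * (X - X\<^sup>2)) = real m * (X ^ m - X ^ Suc m)"
    by (cases m) (simp_all add: power2_eq_square algebra_simps)
  have "?lhs = real (Suc m) * X ^ m * (\<Sum>j\<in>UNIV - {i}. U $ j \<bullet> U $ j)
             + 4 * real (Suc m choose 2) * X ^ (m - 1) * (\<Sum>j\<in>UNIV - {i}. (U $ i \<bullet> U $ j)\<^sup>2)"
    unfolding X_def sum.distrib sum_distrib_left by (simp add: power_mult_distrib mult_ac)
  also have "\<dots> = real (Suc m) * X ^ m * (real CARD('r) - X)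
                  + 2 * real (Suc m) * (real m * (X ^ (m - 1) * (X - X\<^sup>2)))"
    unfolding diag off choose by (simp add: field_simps)
  also have "\<dots> = real (Suc m) * ((real CARD('r) + 2 * real m) * X ^ m - (1 + 2 * real m) * X ^ Suc m)"
    unfolding shift by (simp add: algebra_simps)
  finally show ?thesis unfolding X_def .
qed

lemma incoherent_set_eq:
  "(incoherent_set c :: (real^'r^'s) set) = stiefel \<inter> (\<Inter>i. {U. norm (U $ i) \<le> c})"
  by (auto simp: incoherent_set_def norm_2inf_def)

lemma closed_incoherent_set: "closed (incoherent_set c :: (real^'r^'s) set)"
  unfolding incoherent_set_eq
  by (intro closed_Int compact_imp_closed[OF compact_stiefel] closed_INT ballI closed_Collect_le
      continuous_intros)

lemma stiefel_subset_incoherent_set: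
  fixes t :: real
  assumes "0 < t"
  shows "stiefel \<subseteq> incoherent_set (sqrt t) \<union> (\<Union>i. {U :: real^'r^'s. t ^ k \<le> (U $ i \<bullet> U $ i) ^ k})"
proof
  fix U :: "real^'r^'s"
  assume "U \<in> stiefel"
  show "U \<in> incoherent_set (sqrt t) \<union> (\<Union>i. {U. t ^ k \<le> (U $ i \<bullet> U $ i) ^ k})"
  proof (cases "\<forall>i. (U $ i \<bullet> U $ i) ^ k < t ^ k")
    case True
    have "norm (U $ i) \<le> sqrt t" for i
    proof -
      have "U $ i \<bullet> U $ i < t"
        using True power_less_imp_less_base assms by (metis less_le)
      then show ?thesis by (simp add: real_le_rsqrt power2_norm_eq_inner)
    qed
    with \<open>U \<in> stiefel\<close> show ?thesis by (simp add: incoherent_set_eq)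
  qed (auto simp: not_less)
qed

section \<open>Row moments under the Haar measure\<close>

locale stiefel_haar =
  fixes M :: "(real^'r^'s) measure"
  assumes haar_stiefel: "haar_stiefel M"
begin

sublocale prob_space M
  using haar_stiefel by (simp add: haar_stiefel_def)

lemma sets_eq_borel: "sets M = sets borel"
  using haar_stiefel by (simp add: haar_stiefel_def)

lemma space_eq_UNIV: "space M = UNIV"
  using sets_eq_imp_space_eq[OF sets_eq_borel] by simp

lemma measure_stiefel: "measure M stiefel = 1"
  using haar_stiefel by (simp add: haar_stiefel_def measure_def)

lemma AE_stiefel: "AE U in M. U \<in> stiefel"
  using AE_prob_1[OF measure_stiefel] .

lemma borel_measurable_continuous: "continuous_on UNIV f \<Longrightarrow> f \<in> borel_measurable M"
  using measurable_cong_sets[OF sets_eq_borel refl] borel_measurable_continuous_onI by blast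

lemma integrable_continuous:
  fixes f :: "real^'r^'s \<Rightarrow> real"
  assumes "continuous_on UNIV f"
  shows "integrable M f"
proof -
  have "bounded (f ` stiefel)"
    using compact_continuous_image[OF continuous_on_subset[OF assms] compact_stiefel]
    by (simp add: compact_imp_bounded)
  then obtain B where B: "\<And>U. U \<in> stiefel \<Longrightarrow> norm (f U) \<le> B"
    unfolding bounded_iff by auto
  have "AE U in M. norm (f U) \<le> B"
    using AE_stiefel by eventually_elim (rule B)
  then show ?thesis
    using integrable_const_bound borel_measurable_continuous[OF assms] by blast
qed

lemma integral_orthogonal_mult_left:
  fixes f :: "real^'r^'s \<Rightarrow> real"
  assumes "orthogonal_matrix Q" and "continuous_on UNIV f"
  shows "(\<integral>U. f (Q ** U) \<partial>M) = (\<integral>U. f U \<partial>M)"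
proof -
  have "(\<lambda>U. Q ** U) \<in> measurable M M"
    unfolding measurable_cong_sets[OF sets_eq_borel sets_eq_borel] matrix_matrix_mult_def
    by (intro borel_measurable_continuous_onI continuous_intros)
  then have "(\<integral>U. f (Q ** U) \<partial>M) = (\<integral>U. f U \<partial>distr M M (\<lambda>U. Q ** U))"
    by (simp add: integral_distr borel_measurable_continuous[OF assms(2)])
  also have "distr M M (\<lambda>U. Q ** U) = M"
    using haar_stiefel assms(1) by (simp add: haar_stiefel_def)
  finally show ?thesis .
qed

(* By rotation invariance the choice of the row is immaterial (integral_row_power). *)
definition row_moment :: "nat \<Rightarrow> real" where
  "row_moment k = (\<integral>U. (U $ undefined \<bullet> U $ undefined) ^ k \<partial>M)"

lemma integral_unit_direction_power:
  assumes "norm a = 1"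
  shows "(\<integral>U. ((a v* U) \<bullet> (a v* U)) ^ k \<partial>M) = row_moment k"
proof -
  obtain A where A: "orthogonal_matrix A" "A *v axis undefined 1 = a"
    using orthogonal_matrix_exists_basis[OF assms] by blast
  have "a v* U = (transpose A ** U) $ undefined" for U :: "real^'r^'s"
  proof -
    have "a v* U = (axis undefined 1 v* transpose A) v* U"
      by (simp add: A(2))
    also have "\<dots> = (transpose A ** U) $ undefined"
      unfolding vector_matrix_mul_assoc by (simp add: vector_matrix_mult_axis)
    finally show ?thesis .
  qed
  then have "(\<integral>U. ((a v* U) \<bullet> (a v* U)) ^ k \<partial>M)
           = (\<integral>U. ((transpose A ** U) $ undefined \<bullet> (transpose A ** U) $ undefined) ^ k \<partial>M)"
    by simp
  also have "\<dots> = row_moment k"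
    unfolding row_moment_def using A(1)
    by (intro integral_orthogonal_mult_left) (auto simp: orthogonal_matrix_transpose intro!: continuous_intros)
  finally show ?thesis .
qed

lemma integral_direction_power:
  assumes "a \<noteq> 0"
  shows "(\<integral>U. ((a v* U) \<bullet> (a v* U)) ^ k \<partial>M) = (a \<bullet> a) ^ k * row_moment k"
proof -
  define u where "u = a /\<^sub>R norm a"
  have "a v* U = norm a *\<^sub>R (u v* U)" for U :: "real^'r^'s"
    using assms by (simp add: u_def scaleR_vector_matrix_assoc)
  then have "((a v* U) \<bullet> (a v* U)) ^ k = (a \<bullet> a) ^ k * ((u v* U) \<bullet> (u v* U)) ^ k"
    for U :: "real^'r^'s"
    by (simp add: dot_square_norm power2_eq_square power_mult_distrib)
  moreover have "norm u = 1"
    using assms by (simp add: u_def)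
  ultimately show ?thesis
    using integral_unit_direction_power by simp
qed

lemma integral_row_power: "(\<integral>U. (U $ i \<bullet> U $ i) ^ k \<partial>M) = row_moment k"
  using integral_unit_direction_power[of "axis i 1" k] by (simp add: vector_matrix_mult_axis)

lemma row_moment_0: "row_moment 0 = 1"
  by (simp add: row_moment_def prob_space)

(* The coefficient of t^2 in E |(e_i + t e_j)^T U|^(2k) = (1 + t^2)^k c_k. *)
lemma integral_row_second_coeff:
  assumes "i \<noteq> j"
  shows "(\<integral>U. real k * (U $ i \<bullet> U $ i) ^ (k - 1) * (U $ j \<bullet> U $ j)
              + real (k choose 2) * (U $ i \<bullet> U $ i) ^ (k - 2) * (2 * (U $ i \<bullet> U $ j))\<^sup>2 \<partial>M)
         = real k * row_moment k"
proof -
  define p where "p U = [:U $ i \<bullet> U $ i, 2 * (U $ i \<bullet> U $ j), U $ j \<bullet> U $ j:]"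
    for U :: "real^'r^'s"
  have "(\<integral>U. coeff (p U ^ k) 2 \<partial>M) = coeff (smult (row_moment k) ([:1, 0, 1:] ^ k)) 2"
  proof (rule integral_coeff_eq_coeff)
    show "integrable M (\<lambda>U. coeff (p U ^ k) n)" for n
      unfolding p_def
      by (intro integrable_continuous continuous_on_coeff_power continuous_on_coeff_pCons
          continuous_intros)
    show "degree (p U ^ k) \<le> 2 * k" for U
    proof -
      have "degree (p U ^ k) \<le> degree (p U) * k" by (rule degree_power_le)
      also have "\<dots> \<le> 2 * k" by (simp add: p_def)
      finally show ?thesis .
    qed
    fix t
    define a :: "real^'s" where "a = axis i 1 + axis j t"
    have "a v* U = U $ i + t *\<^sub>R U $ j" for U :: "real^'r^'s"
      by (simp add: a_def vector_matrix_left_distrib vector_matrix_mult_axis)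
    then have "poly (p U ^ k) t = ((a v* U) \<bullet> (a v* U)) ^ k" for U
      by (simp add: p_def poly_power inner_add_left inner_add_right inner_commute
          power2_eq_square algebra_simps)
    moreover have "a \<bullet> a = 1 + t\<^sup>2"
      using assms by (simp add: a_def inner_add_left inner_add_right inner_axis_axis power2_eq_square)
    moreover from this have "a \<noteq> 0"
      by (auto simp: add_nonneg_eq_0_iff)
    ultimately show "(\<integral>U. poly (p U ^ k) t \<partial>M) = poly (smult (row_moment k) ([:1, 0, 1:] ^ k)) t"
      by (simp add: integral_direction_power poly_power power2_eq_square)
  qed
  then show ?thesis by (simp add: p_def coeff_trinomial_power_2)
qed

lemma row_moment_Suc:
  "(real CARD('r) + 2 * real m) * row_moment m = (real CARD('s) + 2 * real m) * row_moment (Suc m)"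
proof -
  fix i :: 's
  define f where "f j U = real (Suc m) * (U $ i \<bullet> U $ i) ^ m * (U $ j \<bullet> U $ j)
    + real (Suc m choose 2) * (U $ i \<bullet> U $ i) ^ (m - 1) * (2 * (U $ i \<bullet> U $ j))\<^sup>2"
    for j and U :: "real^'r^'s"
  have f_cont: "continuous_on UNIV (f j)" for j
    unfolding f_def by (intro continuous_intros)
  have "(\<Sum>j\<in>UNIV - {i}. \<integral>U. f j U \<partial>M) = (\<Sum>j\<in>UNIV - {i}. real (Suc m) * row_moment (Suc m))"
    using integral_row_second_coeff[of i _ "Suc m"] by (intro sum.cong) (auto simp: f_def)
  also have "\<dots> = real (Suc m) * ((real CARD('s) - 1) * row_moment (Suc m))"
    by (simp add: card_Diff_subset)
  finally have sum_by_pairs: "(\<Sum>j\<in>UNIV - {i}. \<integral>U. f j U \<partial>M) = \<dots>" .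
  have "(\<Sum>j\<in>UNIV - {i}. \<integral>U. f j U \<partial>M) = (\<integral>U. (\<Sum>j\<in>UNIV - {i}. f j U) \<partial>M)"
    by (intro Bochner_Integration.integral_sum[symmetric] integrable_continuous f_cont)
  also have "\<dots> = (\<integral>U. real (Suc m) * ((real CARD('r) + 2 * real m) * (U $ i \<bullet> U $ i) ^ m
                                   - (1 + 2 * real m) * (U $ i \<bullet> U $ i) ^ Suc m) \<partial>M)"
  proof (intro integral_cong_AE borel_measurable_continuous continuous_intros f_cont)
    show "AE U in M. (\<Sum>j\<in>UNIV - {i}. f j U) = real (Suc m) * ((real CARD('r) + 2 * real m)
            * (U $ i \<bullet> U $ i) ^ m - (1 + 2 * real m) * (U $ i \<bullet> U $ i) ^ Suc m)"
      using AE_stiefel by eventually_elim (simp only: f_def stiefel_sum_second_coeff)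
  qed
  also have "\<dots> = real (Suc m) * ((real CARD('r) + 2 * real m) * row_moment m
                                   - (1 + 2 * real m) * row_moment (Suc m))"
    by (simp add: integrable_continuous continuous_intros integral_row_power del: power_Suc)
  finally have "real (Suc m) * ((real CARD('s) - 1) * row_moment (Suc m))
      = real (Suc m) * ((real CARD('r) + 2 * real m) * row_moment m - (1 + 2 * real m) * row_moment (Suc m))"
    unfolding sum_by_pairs .
  then have "(real CARD('s) - 1) * row_moment (Suc m)
      = (real CARD('r) + 2 * real m) * row_moment m - (1 + 2 * real m) * row_moment (Suc m)"
    by (rule mult_left_cancel[THEN iffD1, rotated]) simp
  then show ?thesis by (simp add: algebra_simps)
qed

lemma row_moment_eq_prod:
  "row_moment m = (\<Prod>j<m. (real CARD('r) + 2 * real j) / (real CARD('s) + 2 * real j))"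
proof (induction m)
  case (Suc m)
  have "row_moment (Suc m) = (real CARD('r) + 2 * real m) / (real CARD('s) + 2 * real m) * row_moment m"
  proof -
    have "0 < real CARD('s) + 2 * real m" by (simp add: add_pos_nonneg)
    then show ?thesis using row_moment_Suc[of m] by (simp add: field_simps)
  qed
  then show ?case by (simp add: Suc.IH)
qed (simp add: row_moment_0)

lemma row_moment_le:
  "row_moment (Suc k) \<le> ((real CARD('r) + 2 * real k) / real CARD('s)) ^ Suc k"
proof -
  have "row_moment (Suc k) \<le> (\<Prod>j<Suc k. (real CARD('r) + 2 * real k) / real CARD('s))"
    unfolding row_moment_eq_prod
    by (intro prod_mono) (auto intro!: frac_le)
  then show ?thesis by simp
qed

lemma measure_incoherent_set_ge:
  assumes "t > 0"
  shows "1 - real CARD('s) * row_moment k / t ^ k \<le> measure M (incoherent_set (sqrt t))"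
proof -
  define bad where "bad i = {U \<in> space M. t ^ k \<le> (U $ i \<bullet> U $ i) ^ k}" for i :: 's
  have bad_sets: "bad i \<in> sets M" for i
    unfolding bad_def by (intro borel_measurable_continuous continuous_intros measurable)
  have "measure M (bad i) \<le> row_moment k / t ^ k" for i
    using integral_Markov_inequality_measure[of M "\<lambda>U. (U $ i \<bullet> U $ i) ^ k" "space M" "t ^ k"] assms
    by (simp add: bad_def integrable_continuous continuous_intros integral_row_power)
  then have "(\<Sum>i\<in>UNIV. measure M (bad i)) \<le> real CARD('s) * row_moment k / t ^ k"
    using sum_mono[of UNIV "\<lambda>i. measure M (bad i)" "\<lambda>_. row_moment k / t ^ k"] by simp
  then have "measure M (\<Union>i. bad i) \<le> real CARD('s) * row_moment k / t ^ k"
    using finite_measure_subadditive_finite[of UNIV bad] bad_sets by fastforce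
  moreover have "measure M stiefel \<le> measure M (incoherent_set (sqrt t)) + measure M (\<Union>i. bad i)"
  proof -
    have sets: "incoherent_set (sqrt t) \<in> sets M" "(\<Union>i. bad i) \<in> sets M"
      using bad_sets by (auto simp: sets_eq_borel intro: borel_closed closed_incoherent_set)
    have "stiefel \<subseteq> incoherent_set (sqrt t) \<union> (\<Union>i. bad i)"
      using stiefel_subset_incoherent_set[OF assms, of k] by (simp add: bad_def space_eq_UNIV)
    then have "measure M stiefel \<le> measure M (incoherent_set (sqrt t) \<union> (\<Union>i. bad i))"
      using sets by (intro finite_measure_mono) auto
    also have "\<dots> \<le> measure M (incoherent_set (sqrt t)) + measure M (\<Union>i. bad i)"
      using sets by (rule measure_Un_le)
    finally show ?thesis .
  qed
  ultimately show ?thesis using measure_stiefel by linarith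
qed

end

section \<open>The numerical estimate\<close>

lemma exp_of_nat_le_power_3: "exp (real n) \<le> 3 ^ n"
proof -
  have "exp (real n) = exp 1 ^ n" using exp_of_nat_mult[of n 1] by simp
  also have "\<dots> \<le> 3 ^ n" by (intro power_mono exp_le) simp
  finally show ?thesis .
qed

lemma seven_twelfths_power_bound: "3 \<le> k \<Longrightarrow> (2 * real k + 1) * (7 / 12) ^ k \<le> 2"
proof (induction k rule: dec_induct)
  case (step k)
  have "(2 * real (Suc k) + 1) * (7 / 12) ^ Suc k = (2 * real k + 3) * (7 / 12) * (7 / 12) ^ k"
    by (simp add: algebra_simps)
  also have "\<dots> \<le> (2 * real k + 1) * (7 / 12) ^ k"
    by (rule mult_right_mono) (use step in auto)
  finally show ?case using step.IH by linarith
qed (simp add: power_numeral_reduce)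

lemma union_bound_estimate:
  fixes r m s :: real and k :: nat
  assumes "1 \<le> r" and "0 < m" and "3 \<le> k" and "12 * m \<le> 3 ^ Suc k" and "12 * m * real k \<le> s"
  shows "s * ((r + 2 * real k) / s) ^ Suc k / (r / m) ^ Suc k \<le> 1 / 2"
proof -
  have "0 < real k" "0 < s"
    using assms(2,3,5) by (auto intro: less_le_trans[of 0 "12 * m * real k"])
  define q where "q = (2 * real k + 1) * m / s"
  have "(r + 2 * real k) * m \<le> r * (2 * real k + 1) * m"
    using assms(1,2) \<open>0 < real k\<close> by (intro mult_right_mono) (auto simp: algebra_simps)
  then have ratio: "(r + 2 * real k) / s / (r / m) \<le> q"
    using assms(1,2) \<open>0 < s\<close> by (simp add: q_def field_simps)
  have "q \<le> (2 * real k + 1) * m / (12 * m * real k)"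
    unfolding q_def using assms(2,5) \<open>0 < real k\<close> \<open>0 < s\<close> by (intro divide_left_mono) auto
  then have q_le: "q \<le> (2 * real k + 1) / (12 * real k)"
    using assms(2) by simp
  have three: "3 * ((2 * real k + 1) / (12 * real k)) = (2 * real k + 1) / (4 * real k)"
    using \<open>0 < real k\<close> by (simp add: field_simps)
  have "s * ((r + 2 * real k) / s) ^ Suc k / (r / m) ^ Suc k = s * ((r + 2 * real k) / s / (r / m)) ^ Suc k"
    by (simp only: power_divide times_divide_eq_right)
  also have "\<dots> \<le> s * q ^ Suc k"
    using ratio assms(1,2) \<open>0 < s\<close> by (intro mult_left_mono power_mono) auto
  also have "\<dots> = (2 * real k + 1) * m * q ^ k"
    using \<open>0 < s\<close> by (simp add: q_def)
  also have "\<dots> \<le> (2 * real k + 1) * (3 ^ Suc k / 12) * ((2 * real k + 1) / (12 * real k)) ^ k"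
    using assms(2,4) q_le \<open>0 < s\<close> by (intro mult_mono power_mono) (auto simp: q_def)
  also have "\<dots> = (2 * real k + 1) / 4 * ((2 * real k + 1) / (4 * real k)) ^ k"
    unfolding three[symmetric] by (simp only: power_mult_distrib power_Suc)
  also have "\<dots> \<le> (2 * real k + 1) / 4 * (7 / 12) ^ k"
    using assms(3) \<open>0 < real k\<close> by (intro mult_left_mono power_mono) (auto simp: field_simps)
  also have "\<dots> \<le> 1 / 2"
    using seven_twelfths_power_bound[OF assms(3)] by simp
  finally show ?thesis .
qed

lemma moment_order_exists:
  fixes m s :: real
  assumes "4 \<le> m" and "12 * m * ln (12 * m) \<le> s"
  obtains k :: nat where "3 \<le> k" and "12 * m \<le> 3 ^ Suc k" and "12 * m * real k \<le> s"
proof -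
  define L where "L = ln (12 * m)"
  define k where "k = nat \<lfloor>L\<rfloor>"
  have exp_L: "exp L = 12 * m"
    using assms(1) by (simp add: L_def)
  then have "exp 3 \<le> exp L"
    using exp_of_nat_le_power_3[of 3] assms(1) by simp
  then have "real k = of_int \<lfloor>L\<rfloor>" and "3 \<le> \<lfloor>L\<rfloor>"
    by (simp_all add: k_def le_floor_iff)
  then have k: "3 \<le> k" "real k \<le> L" "L \<le> real (Suc k)"
    using floor_correct[of L] by linarith+
  have "12 * m \<le> exp (real (Suc k))"
    unfolding exp_L[symmetric] using k(3) by simp
  also have "\<dots> \<le> 3 ^ Suc k"
    by (rule exp_of_nat_le_power_3)
  finally have "12 * m \<le> 3 ^ Suc k" .
  moreover have "12 * m * real k \<le> s"
    using k(2) assms by (smt (verit) L_def mult_left_mono)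
  ultimately show thesis
    using k(1) that by blast
qed

theorem lemma15:
  fixes \<mu> :: real and n :: int and M :: "(real^'r^'s) measure"
  assumes "\<mu> > 0"
    and "real_of_int n / \<mu> \<ge> max 4 (real CARD('r))"
    and "real CARD('s) \<ge> (12 * real_of_int n / \<mu>) * ln (12 * real_of_int n / \<mu>)"
    and "haar_stiefel M"
  shows "measure M (incoherent_set (sqrt (\<mu> * real CARD('r) / real_of_int n))) \<ge> 1 / 2"
proof -
  interpret stiefel_haar M by unfold_locales (rule assms(4))
  define m where "m = real_of_int n / \<mu>"
  have "4 \<le> m"
    using assms(2) by (simp add: m_def)
  obtain k where k: "3 \<le> k" "12 * m \<le> 3 ^ Suc k" "12 * m * real k \<le> real CARD('s)"
    using moment_order_exists[OF \<open>4 \<le> m\<close>, of "real CARD('s)"] assms(3) by (auto simp: m_def)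
  have "real CARD('s) * row_moment (Suc k) / (real CARD('r) / m) ^ Suc k
      \<le> real CARD('s) * ((real CARD('r) + 2 * real k) / real CARD('s)) ^ Suc k / (real CARD('r) / m) ^ Suc k"
    using row_moment_le[of k] \<open>4 \<le> m\<close> by (intro divide_right_mono mult_left_mono) auto
  also have "\<dots> \<le> 1 / 2"
    using \<open>4 \<le> m\<close> k by (intro union_bound_estimate) auto
  finally have "real CARD('s) * row_moment (Suc k) / (real CARD('r) / m) ^ Suc k \<le> 1 / 2" .
  moreover have "0 < real CARD('r) / m"
    using \<open>4 \<le> m\<close> by simp
  ultimately have "1 / 2 \<le> measure M (incoherent_set (sqrt (real CARD('r) / m)))"
    using measure_incoherent_set_ge[of "real CARD('r) / m" "Suc k"] by linarith
  moreover have "\<mu> * real CARD('r) / real_of_int n = real CARD('r) / m"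
    using assms(1) \<open>4 \<le> m\<close> by (simp add: m_def)
  ultimately show ?thesis by simp
qed

end
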